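(* Let $f=(f_0,f_1)\in F\times F$ be such that $P_1^f\ll P_0^f$, and let $T$ be an anonymous comparison test that is error-free. Then $P_0^f(\{T(\cdot,f)=\tfrac12\})>0$.
   Context: Let $\Omega=\{0,1\}$ and let $\Omega^\infty$ be the set of infinite sequences $\omega=(\omega_1,\omega_2,\dots)$ with $\omega_t\in\Omega$; $\omega^t=(\omega_1,\dots,\omega_t)$ denotes the prefix of length $t$ and also the cylinder set $\{\hat\omega\in\Omega^\infty:\hat\omega^t=\omega^t\}$. $\Omega^\infty$ carries the $\sigma$-algebra generated by all cylinders. $\Delta(\Omega)$ is the set of probability distributions on $\Omega$. A forecasting strategy is a function $f:\bigcup_{t\ge 0}(\Omega\times\Delta(\Omega)\times\Delta(\Omega))^t\to\Delta(\Omega)$; $F$ denotes the set of all forecasting strategies. For a pair $f=(f_0,f_1)\in F\times F$ and $\omega\in\Omega^\infty$, the play path $h=h(\omega,f_0,f_1)$ is defined recursively by $h^0=\emptyset$ and $h^t=(h^{t-1},(\omega_t,f_0(h^{t-1}),f_1(h^{t-1})))$. The pair $f$ induces probability measures $P_0^f,P_1^f$ on $\Omega^\infty$ determined by $P_i^f(\omega^t)=\prod_{n=1}^t f_i(h^{n-1}(\omega,f_0,f_1))[\omega_n]$. A comparison test is a function $T:\Omega^\infty\times F\times F\to\{0,\tfrac12,1\}$, measurable in $\omega$ for each fixed pair. Write $\{T(\cdot,f)=k\}=\{\omega: T(\omega,f_0,f_1)=k\}$. $T$ is anonymous if $T(\omega,f_0,f_1)=1-T(\omega,f_1,f_0)$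 for all $\omega,f_0,f_1$. $T$ is error-free if for all $f\in F\times F$ and $i\in\{0,1\}$, $P_{1-i}^f(\{T(\cdot,f)=i\})=0$. *)

theory Defs
  imports "HOL-Probability.Probability"
begin

(* Omega = bool (False ~ 0, True ~ 1); Delta(Omega) = bool pmf.
   Infinite sequences: nat => bool, with omega_{t+1} represented as (w t). *)

type_synonym hist = "(bool \<times> bool pmf \<times> bool pmf) list"
type_synonym strat = "hist \<Rightarrow> bool pmf"

(* sigma-algebra on Omega^infinity generated by cylinders = product sigma-algebra *)
definition seq_space :: "(nat \<Rightarrow> bool) measure" where
  "seq_space = PiM UNIV (\<lambda>_. count_space UNIV)"

fun play :: "(nat \<Rightarrow> bool) \<Rightarrow> strat \<Rightarrow> strat \<Rightarrow> nat \<Rightarrow> hist" where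
  "play w f0 f1 0 = []"
| "play w f0 f1 (Suc t) =
     play w f0 f1 t @ [(w t, f0 (play w f0 f1 t), f1 (play w f0 f1 t))]"

definition comp :: "strat \<times> strat \<Rightarrow> nat \<Rightarrow> strat" where
  "comp f i = (if i = 0 then fst f else snd f)"

definition cyl :: "(nat \<Rightarrow> bool) \<Rightarrow> nat \<Rightarrow> (nat \<Rightarrow> bool) set" where
  "cyl w t = {v. \<forall>n<t. v n = w n}"

definition induced_measures :: "(strat \<times> strat \<Rightarrow> nat \<Rightarrow> (nat \<Rightarrow> bool) measure) \<Rightarrow> bool" where
  "induced_measures Pm \<longleftrightarrow>
     (\<forall>f. \<forall>i\<in>{0,1}. prob_space (Pm f i) \<and> sets (Pm f i) = sets seq_space \<and>
        (\<forall>w t. measure (Pm f i) (cyl w t) =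
            (\<Prod>n<t. pmf (comp f i (play w (fst f) (snd f) n)) (w n))))"

type_synonym test = "(nat \<Rightarrow> bool) \<Rightarrow> strat \<Rightarrow> strat \<Rightarrow> real"

definition comparison_test :: "test \<Rightarrow> bool" where
  "comparison_test T \<longleftrightarrow>
     (\<forall>w f0 f1. T w f0 f1 \<in> {0, 1/2, 1}) \<and>
     (\<forall>f0 f1. (\<lambda>w. T w f0 f1) \<in> borel_measurable seq_space)"

definition anonymous :: "test \<Rightarrow> bool" where
  "anonymous T \<longleftrightarrow> (\<forall>w f0 f1. T w f0 f1 = 1 - T w f1 f0)"

definition test_set :: "test \<Rightarrow> strat \<times> strat \<Rightarrow> real \<Rightarrow> (nat \<Rightarrow> bool) set" where
  "test_set T f k = {w. T w (fst f) (snd f) = k}"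

definition error_free :: "(strat \<times> strat \<Rightarrow> nat \<Rightarrow> (nat \<Rightarrow> bool) measure) \<Rightarrow> test \<Rightarrow> bool" where
  "error_free Pm T \<longleftrightarrow>
     (\<forall>f. \<forall>i\<in>{0::nat,1}. measure (Pm f (1 - i)) (test_set T f (real i)) = 0)"

end

theory Submission
  imports Defs
begin

text \<open>If the test never declares a tie on a set of positive P0-probability, then the set where
  it does not pick 0 is P0-null, hence P1-null by absolute continuity; error-freeness makes the
  set where it picks 0 P1-null as well, so P1 would be the zero measure.\<close>

lemma absolutely_continuous_no_null_cover:
  assumes "prob_space N" "absolutely_continuous M N"
    and "A \<in> null_sets N" "B \<in> null_sets M" "space N \<subseteq> A \<union> B"
  shows False
proof -
  have "A \<union> B \<in> null_sets N"
    using assms(2-4) unfolding absolutely_continuous_def by auto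
  then have "emeasure N (space N) = 0"
    using assms(5) by (meson emeasure_eq_0 null_setsD1 null_setsD2)
  then show False
    using prob_space.emeasure_space_1[OF assms(1)] by simp
qed

lemma prob_space_measure_zero_null:
  assumes "prob_space M" "A \<in> sets M" "measure M A = 0"
  shows "A \<in> null_sets M"
  using assms by (simp add: null_setsI finite_measure.emeasure_eq_measure prob_space.finite_measure)

lemma induced_measures_prob_space:
  assumes "induced_measures Pm" "i \<in> {0, 1}"
  shows "prob_space (Pm f i)" "sets (Pm f i) = sets seq_space"
  using assms unfolding induced_measures_def by blast+

lemma test_set_sets:
  assumes "comparison_test T"
  shows "test_set T f k \<in> sets seq_space"
proof -
  have "(\<lambda>w. T w (fst f) (snd f)) \<in> borel_measurable seq_space"
    using assms unfolding comparison_test_def by auto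
  from measurable_sets[OF this, of "{k}"] show ?thesis
    by (simp add: test_set_def seq_space_def space_PiM vimage_def)
qed

lemma comparison_test_cover:
  assumes "comparison_test T"
  shows "UNIV = test_set T f 0 \<union> (test_set T f (1/2) \<union> test_set T f 1)"
  using assms unfolding comparison_test_def test_set_def by auto

lemma error_free_measure_zero:
  assumes "error_free Pm T"
  shows "measure (Pm f 1) (test_set T f 0) = 0" "measure (Pm f 0) (test_set T f 1) = 0"
  using assms unfolding error_free_def
  by (metis insertCI diff_self_eq_0 diff_zero of_nat_0 of_nat_1)+

theorem mainTheorem2:
  fixes Pm :: "strat \<times> strat \<Rightarrow> nat \<Rightarrow> (nat \<Rightarrow> bool) measure"
    and T :: test and f :: "strat \<times> strat"
  assumes "induced_measures Pm"
    and "absolutely_continuous (Pm f 0) (Pm f 1)"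
    and "comparison_test T"
    and "anonymous T"
    and "error_free Pm T"
  shows "measure (Pm f 0) (test_set T f (1/2)) > 0"
proof (rule ccontr)
  assume "\<not> measure (Pm f 0) (test_set T f (1/2)) > 0"
  then have tie_zero: "measure (Pm f 0) (test_set T f (1/2)) = 0"
    using measure_nonneg[of "Pm f 0"] by (meson antisym not_less)
  note P0 = induced_measures_prob_space[OF assms(1), of 0 f]
  note P1 = induced_measures_prob_space[OF assms(1), of 1 f]
  note sets = test_set_sets[OF assms(3)]
  note errors = error_free_measure_zero[OF assms(5), of f]
  have "test_set T f 0 \<in> null_sets (Pm f 1)"
    using prob_space_measure_zero_null[OF P1(1)] P1(2) sets errors(1) by simp
  moreover have "test_set T f (1/2) \<union> test_set T f 1 \<in> null_sets (Pm f 0)"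
    using prob_space_measure_zero_null[OF P0(1)] P0(2) sets tie_zero errors(2)
    by (simp add: null_sets.Un)
  moreover have "space (Pm f 1) \<subseteq> test_set T f 0 \<union> (test_set T f (1/2) \<union> test_set T f 1)"
    using comparison_test_cover[OF assms(3)] by simp
  ultimately show False
    using absolutely_continuous_no_null_cover P1(1) assms(2) by blast
qed

end
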